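(* $\mathsf{D}_0(C_2^4)=5$ and $k_{\mathsf{D}}(C_2^4)=3$. Additionally, $\mathsf{D}_{1}(C_2^4)=5$ and $\mathsf{D}_{2}(C_2^4)=8$.
   Context: $C_2^4$ is the elementary abelian $2$-group of rank $4$. A sequence over a finite abelian group $G$ is a finite unordered list of elements with repetitions; zero-sum means its terms sum to $0$. $\mathsf{D}_k(G)$ ($k\in\mathbb{N}$) is the smallest $\ell$ such that every sequence over $G$ of length at least $\ell$ has $k$ disjoint non-empty zero-sum subsequences. It is known that there exists $\mathsf{D}_0(G)\in\mathbb{N}_0$ with $\mathsf{D}_k(G)=\mathsf{D}_0(G)+k\exp(G)$ for all sufficiently large $k$; $k_{\mathsf{D}}(G)$ is the minimal $k_0\in\mathbb{N}$ with $\mathsf{D}_k(G)=\mathsf{D}_0(G)+k\exp(G)$ for all $k\ge k_0$. *)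

theory Defs
  imports "HOL-Analysis.Analysis" "HOL-Library.Multiset" "HOL-Library.Z2"
begin

text \<open>Sequences over an abelian group G (given as a type of class ab_group_add)
  are finite multisets of elements of G. The type of C_2^4 is bit ^ 4.\<close>

type_synonym C2_4 = "bit ^ 4"

definition zero_sum :: "'a::ab_group_add multiset \<Rightarrow> bool" where
  "zero_sum T \<longleftrightarrow> sum_mset T = 0"

definition has_k_disj_zs :: "nat \<Rightarrow> 'a::ab_group_add multiset \<Rightarrow> bool" where
  "has_k_disj_zs k S \<longleftrightarrow>
     (\<exists>Ts :: 'a multiset list. length Ts = k \<and>
        (\<forall>T \<in> set Ts. T \<noteq> {#} \<and> zero_sum T) \<and> sum_list Ts \<subseteq># S)"

definition Dk :: "'a::ab_group_add itself \<Rightarrow> nat \<Rightarrow> nat" where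
  "Dk G k = (LEAST l. \<forall>S :: 'a multiset. size S \<ge> l \<longrightarrow> has_k_disj_zs k S)"

definition group_exp :: "'a::ab_group_add itself \<Rightarrow> nat" where
  "group_exp G = (LEAST n. n > 0 \<and> (\<forall>g :: 'a. (\<Sum>i<n. g) = 0))"

definition D0 :: "'a::ab_group_add itself \<Rightarrow> nat" where
  "D0 G = (THE d. \<exists>K. \<forall>k\<ge>K. Dk G k = d + k * group_exp G)"

definition kD :: "'a::ab_group_add itself \<Rightarrow> nat" where
  "kD G = (LEAST k0. k0 \<ge> 1 \<and> (\<forall>k\<ge>k0. Dk G k = D0 G + k * group_exp G))"

end

theory Submission
  imports Defs
begin

text \<open>
  A sequence over \<open>C\<^sub>2\<^sup>4\<close> containing \<open>0\<close> or a repeated element has a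
  zero-sum subsequence of length at most \<open>2\<close>, which can be split off by induction. Otherwise
  it is a set of at most \<open>15\<close> nonzero elements, and the remaining cases are combinatorial:
  \<open>5\<close> elements have \<open>32\<close> subset sums in a group of order \<open>16\<close>, hence a zero-sum subset;
  a set of nonzero elements that is not sum-free contains a zero-sum triple \<open>{x, y, x + y}\<close>,
  and a sum-free set has at most \<open>8\<close> elements, with equality only for the complement of a
  hyperplane, which splits into zero-sum quadruples \<open>{a, a + t, c, c + t}\<close>; finally, the
  \<open>12\<close> elements outside a subgroup \<open>{0, u, v, u + v}\<close> split into four zero-sum triples.

  Give weight \<open>1\<close> to elements with first coordinate \<open>1\<close> and weight \<open>2\<close> to the
  others. If the elements with first coordinate \<open>1\<close> are distinct and the others nonzero,
  every nonempty zero-sum subsequence has weight at least \<open>4\<close>, since it contains an even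
  number of elements of weight \<open>1\<close>. So a sequence of weight \<open>4k\<close> whose sum is nonzero has
  no \<open>k\<close> disjoint nonempty zero-sum subsequences.
\<close>

lemma filter_mset_all: "\<forall>x\<in>#M. P x \<Longrightarrow> filter_mset P M = M"
  by (simp add: filter_mset_eq_conv)

lemma mset_subset_eq_sum_list: "T \<in> set Ts \<Longrightarrow> T \<subseteq># sum_list Ts"
proof (induction Ts)
  case (Cons T' Ts)
  show ?case
  proof (cases "T = T'")
    case False
    then have "T \<subseteq># sum_list Ts" using Cons by simp
    then show ?thesis using mset_subset_eq_add_right subset_mset.order_trans by fastforce
  qed simp
qed simp

lemma has_k_disj_zs_0 [simp]: "has_k_disj_zs 0 S"
  unfolding has_k_disj_zs_def by simp

lemma has_k_disj_zs_Suc: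
  assumes "T \<noteq> {#}" "zero_sum T" "T \<subseteq># S" "has_k_disj_zs k (S - T)"
  shows "has_k_disj_zs (Suc k) S"
proof -
  from assms(4) obtain Ts where Ts: "length Ts = k" "\<forall>T\<in>set Ts. T \<noteq> {#} \<and> zero_sum T"
    "sum_list Ts \<subseteq># S - T" unfolding has_k_disj_zs_def by blast
  have "sum_list (T # Ts) \<subseteq># T + (S - T)"
    using Ts(3) by (simp add: mset_subset_eq_mono_add_left_cancel)
  also have "\<dots> = S" using assms(3) by (simp add: subset_mset.add_diff_inverse)
  finally show ?thesis unfolding has_k_disj_zs_def
    using Ts assms(1,2) by (intro exI[of _ "T # Ts"]) auto
qed

lemma has_k_disj_zs_mset_set_Suc:
  fixes A X :: "'a::ab_group_add set"
  assumes "finite A" "X \<subseteq> A" "X \<noteq> {}" "\<Sum>X = 0" "has_k_disj_zs k (mset_set (A - X))"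
  shows "has_k_disj_zs (Suc k) (mset_set A)"
proof (rule has_k_disj_zs_Suc[of "mset_set X"])
  have "finite X" using assms(1,2) by (rule finite_subset[rotated])
  then show "mset_set X \<noteq> {#}" "zero_sum (mset_set X)"
    using assms(3,4) by (simp_all add: mset_set_empty_iff zero_sum_def sum_unfold_sum_mset)
  show "mset_set X \<subseteq># mset_set A" using assms(1,2) by (simp add: subset_imp_msubset_mset_set)
  show "has_k_disj_zs k (mset_set A - mset_set X)" using assms(1,2,5) by (simp add: mset_set_Diff)
qed

lemma has_k_disj_zs_of_lists:
  fixes A :: "'a::ab_group_add set"
  assumes "finite A" "distinct (concat xss)" "set (concat xss) \<subseteq> A"
    "\<forall>xs\<in>set xss. xs \<noteq> [] \<and> sum_list xs = 0"
  shows "has_k_disj_zs (length xss) (mset_set A)"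
  unfolding has_k_disj_zs_def
proof (intro exI[of _ "map mset xss"] conjI)
  show "\<forall>T\<in>set (map mset xss). T \<noteq> {#} \<and> zero_sum T"
    using assms(4) by (auto simp: zero_sum_def sum_mset_sum_list)
  have "sum_list (map mset xss) = mset (concat xss)" by (induction xss) auto
  also have "\<dots> = mset_set (set (concat xss))" using assms(2) by (rule mset_set_set[symmetric])
  also have "\<dots> \<subseteq># mset_set A" using assms(1,3) by (simp add: subset_imp_msubset_mset_set)
  finally show "sum_list (map mset xss) \<subseteq># mset_set A" .
qed simp

lemma Dk_eqI:
  fixes S\<^sub>0 :: "'a::ab_group_add multiset"
  assumes "\<And>S::'a multiset. l \<le> size S \<Longrightarrow> has_k_disj_zs k S"
    and "Suc (size S\<^sub>0) = l" "\<not> has_k_disj_zs k S\<^sub>0"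
  shows "Dk TYPE('a) k = l"
  unfolding Dk_def
proof (rule Least_equality)
  fix l' assume "\<forall>S::'a multiset. l' \<le> size S \<longrightarrow> has_k_disj_zs k S"
  then have "\<not> l' \<le> size S\<^sub>0" using assms(3) by blast
  then show "l \<le> l'" using assms(2) by simp
qed (use assms(1) in blast)

lemma D0_eqI:
  assumes "\<And>k. K \<le> k \<Longrightarrow> Dk G k = d + k * group_exp G"
  shows "D0 G = d"
  unfolding D0_def
proof (rule the_equality)
  fix d' assume "\<exists>K'. \<forall>k\<ge>K'. Dk G k = d' + k * group_exp G"
  then obtain K' where "\<forall>k\<ge>K'. Dk G k = d' + k * group_exp G" by blast
  then show "d' = d" using assms[of "max K K'"] by simp
qed (use assms in blast)

lemma kD_eqI:
  assumes "\<And>k. k\<^sub>1 < k \<Longrightarrow> Dk G k = D0 G + k * group_exp G"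
    and "Dk G k\<^sub>1 \<noteq> D0 G + k\<^sub>1 * group_exp G"
  shows "kD G = Suc k\<^sub>1"
  unfolding kD_def
proof (rule Least_equality)
  fix k\<^sub>0 assume "1 \<le> k\<^sub>0 \<and> (\<forall>k\<ge>k\<^sub>0. Dk G k = D0 G + k * group_exp G)"
  then show "Suc k\<^sub>1 \<le> k\<^sub>0" using assms(2) not_less_eq_eq by blast
qed (use assms(1) in auto)

section \<open>Elementary abelian 2-groups\<close>

lemma UNIV_bit: "UNIV = {0, 1 :: bit}"
  by (auto intro: bit.exhaust)

lemma card_UNIV_bit [simp]: "CARD(bit) = 2"
  by (simp add: UNIV_bit)

lemma finite_bit_vec [simp]: "finite (A :: (bit ^ 'n) set)"
proof (rule finite_subset[OF subset_UNIV])
  show "finite (UNIV :: (bit ^ 'n) set)"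
    by (intro card_ge_0_finite) simp
qed

lemma card_bit_vec_le: "card (A :: (bit ^ 'n) set) \<le> 2 ^ CARD('n)"
  using card_mono[OF finite_bit_vec subset_UNIV, of A] by simp

lemma bit_vec_add_self [simp]: "x + x = (0 :: bit ^ 'n)"
  by (simp add: vec_eq_iff)

lemma bit_vec_add_add_self [simp]: "x + (x + y) = (y :: bit ^ 'n)"
  by (simp flip: add.assoc)

lemma bit_vec_uminus [simp]: "- x = (x :: bit ^ 'n)"
  by (simp add: vec_eq_iff)

lemma bit_vec_add_self_right [simp]: "x + y + y = (x :: bit ^ 'n)"
  by (simp add: add.assoc)

lemma bit_vec_add_eq_0_iff [simp]: "x + y = (0 :: bit ^ 'n) \<longleftrightarrow> x = y"
  by (metis bit_vec_add_add_self add.right_neutral)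

lemma bit_vec_add_eq_iff: "x + y = (z :: bit ^ 'n) \<longleftrightarrow> x = z + y"
  by auto

lemma group_exp_bit_vec: "group_exp TYPE(bit ^ 'n) = 2"
  unfolding group_exp_def
proof (rule Least_equality)
  have two: "(\<Sum>i<2::nat. g) = g + g" for g :: "bit ^ 'n"
    by (simp only: numeral_2_eq_2 sum.lessThan_Suc) simp
  show "0 < (2::nat) \<and> (\<forall>g :: bit ^ 'n. (\<Sum>i<(2::nat). g) = 0)"
    by (simp only: two bit_vec_add_self) simp
next
  fix n :: nat assume n: "0 < n \<and> (\<forall>g :: bit ^ 'n. (\<Sum>i<n. g) = 0)"
  have "(\<chi> i. 1) \<noteq> (0 :: bit ^ 'n)" by (simp add: vec_eq_iff)
  then have "n \<noteq> 1" using n by auto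
  then show "2 \<le> n" using n by linarith
qed

lemma ex_not_in_if_card_less: "finite B \<Longrightarrow> card B < card A \<Longrightarrow> \<exists>x\<in>A. x \<notin> B"
  by (metis card_mono not_le subsetI)

text \<open>The Davenport constant of \<open>C\<^sub>2\<^sup>n\<close> is at most \<open>n + 1\<close>: two distinct subsets with the
  same sum have a zero-sum symmetric difference.\<close>

lemma zero_sum_subset_if_card_gt:
  fixes A :: "(bit ^ 'n) set"
  assumes "CARD('n) < card A"
  shows "\<exists>X\<subseteq>A. X \<noteq> {} \<and> \<Sum>X = 0"
proof -
  obtain B where B: "B \<subseteq> A" "card B = Suc CARD('n)"
    using obtain_subset_with_card_n[of "Suc CARD('n)" A] assms by auto
  have "card ((\<lambda>X. \<Sum>X) ` Pow B) \<le> 2 ^ CARD('n)" by (rule card_bit_vec_le)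
  also have "\<dots> < card (Pow B)" using B(2) by (simp add: card_Pow)
  finally have "card ((\<lambda>X. \<Sum>X) ` Pow B) < card (Pow B)" .
  then have "\<not> inj_on (\<lambda>X. \<Sum>X) (Pow B)" using card_image by fastforce
  then obtain X Y where XY: "X \<subseteq> B" "Y \<subseteq> B" "X \<noteq> Y" "\<Sum>X = \<Sum>Y"
    unfolding inj_on_def by blast
  have "\<Sum>X = \<Sum>(X \<inter> Y) + \<Sum>(X - Y)" "\<Sum>Y = \<Sum>(X \<inter> Y) + \<Sum>(Y - X)"
    using sum.Int_Diff[of X _ Y] sum.Int_Diff[of Y _ X] by (simp_all add: Int_commute)
  then have "\<Sum>(X - Y) = \<Sum>(Y - X)" using XY(4) by simp
  moreover have "\<Sum>((X - Y) \<union> (Y - X)) = \<Sum>(X - Y) + \<Sum>(Y - X)"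
    by (rule sum.union_disjoint) auto
  ultimately have "\<Sum>((X - Y) \<union> (Y - X)) = 0" by simp
  moreover have "(X - Y) \<union> (Y - X) \<subseteq> A" "(X - Y) \<union> (Y - X) \<noteq> {}" using XY B by blast+
  ultimately show ?thesis by blast
qed

lemma has_1_disj_zs_if_card_gt:
  fixes A :: "(bit ^ 'n) set"
  assumes "CARD('n) < card A"
  shows "has_k_disj_zs 1 (mset_set A)"
  using zero_sum_subset_if_card_gt[OF assms] has_k_disj_zs_mset_set_Suc[of A _ 0] by auto

definition sum_free :: "'a::plus set \<Rightarrow> bool" where
  "sum_free A \<longleftrightarrow> (\<forall>x\<in>A. \<forall>y\<in>A. x + y \<notin> A)"

lemma sum_free_disjoint_translate: "sum_free A \<Longrightarrow> a \<in> A \<Longrightarrow> A \<inter> (+) a ` A = {}"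
  unfolding sum_free_def by blast

lemma card_translate_bit_vec: "card ((+) a ` A) = card (A :: (bit ^ 'n) set)"
  by (rule card_image) (simp add: inj_on_def)

lemma card_sum_free_union_translate:
  fixes A :: "(bit ^ 'n) set"
  assumes "sum_free A" "a \<in> A"
  shows "card (A \<union> (+) a ` A) = 2 * card A"
  using card_Un_disjoint[OF _ _ sum_free_disjoint_translate[OF assms]]
  by (simp add: card_translate_bit_vec)

lemma card_sum_free_le:
  fixes A :: "(bit ^ 'n) set"
  assumes "sum_free A"
  shows "2 * card A \<le> 2 ^ CARD('n)"
proof (cases "A = {}")
  case False
  then obtain a where "a \<in> A" by blast
  then show ?thesis
    using card_sum_free_union_translate[OF assms] card_bit_vec_le by metis
qed simp

text \<open>A sum-free set of maximal size \<open>2\<^sup>n\<^sup>-\<^sup>1\<close> is the complement of a hyperplane: \<open>A\<close> and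
  \<open>b + A\<close> cover the group.\<close>

lemma sum_free_max_add3_closed:
  fixes A :: "(bit ^ 'n) set"
  assumes "sum_free A" "2 * card A = 2 ^ CARD('n)" and abc: "a \<in> A" "b \<in> A" "c \<in> A"
  shows "a + b + c \<in> A"
proof (rule ccontr)
  assume out: "a + b + c \<notin> A"
  have "card (A \<union> (+) b ` A) = CARD(bit ^ 'n)"
    using card_sum_free_union_translate[OF assms(1) abc(2)] assms(2) by simp
  then have "A \<union> (+) b ` A = UNIV" by (simp add: card_eq_UNIV_imp_eq_UNIV)
  then obtain w where "w \<in> A" "a + b + c = b + w" using out by blast
  then have "a + c \<in> A" by (metis add.commute bit_vec_add_add_self add.assoc)
  then show False using assms(1) abc(1,3) unfolding sum_free_def by blast
qed

lemma has_2_disj_zs_if_add3_closed: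
  fixes A :: "(bit ^ 'n) set"
  assumes closed: "\<And>a b c. a \<in> A \<Longrightarrow> b \<in> A \<Longrightarrow> c \<in> A \<Longrightarrow> a + b + c \<in> A"
    and "6 < card A"
  shows "has_k_disj_zs 2 (mset_set A)"
proof -
  obtain a where a: "a \<in> A" using assms(2) by fastforce
  obtain b where b: "b \<in> A" "b \<notin> {a}" using ex_not_in_if_card_less[of "{a}" A] assms(2) by auto
  define t where "t = a + b"
  have t: "t \<noteq> 0" "a + t = b" using b(2) by (simp_all add: t_def)
  have add_t: "x + t \<in> A" if "x \<in> A" for x
    using closed[OF that a b(1)] by (simp add: t_def add.assoc)
  have pick: "\<exists>x\<in>A. x \<notin> set xs" if "length xs \<le> 6" for xs
  proof (rule ex_not_in_if_card_less)
    show "card (set xs) < card A" using card_length[of xs] that assms(2) by linarith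
  qed simp
  obtain c where c: "c \<in> A" "c \<notin> set [a, a + t]" using pick[of "[a, a + t]"] by auto
  obtain d where d: "d \<in> A" "d \<notin> set [a, a + t, c, c + t]"
    using pick[of "[a, a + t, c, c + t]"] by auto
  obtain e where e: "e \<in> A" "e \<notin> set [a, a + t, c, c + t, d, d + t]"
    using pick[of "[a, a + t, c, c + t, d, d + t]"] by auto
  let ?xss = "[[a, a + t, c, c + t], [d, d + t, e, e + t]]"
  have "has_k_disj_zs (length ?xss) (mset_set A)"
  proof (rule has_k_disj_zs_of_lists)
    show "distinct (concat ?xss)"
      using t(1) c(2) d(2) e(2) by (auto simp: bit_vec_add_eq_iff)
    show "set (concat ?xss) \<subseteq> A" using a c(1) d(1) e(1) add_t by simp
    show "\<forall>xs\<in>set ?xss. xs \<noteq> [] \<and> sum_list xs = 0" by (simp add: add_ac)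
  qed simp
  then show ?thesis by (simp add: numeral_2_eq_2)
qed

lemma not_sum_free_remove_triple:
  fixes A :: "(bit ^ 'n) set"
  assumes "0 \<notin> A" "\<not> sum_free A"
  shows "\<exists>B\<subseteq>A. card B + 3 = card A \<and>
    (\<forall>k. has_k_disj_zs k (mset_set B) \<longrightarrow> has_k_disj_zs (Suc k) (mset_set A))"
proof -
  obtain x y where xy: "x \<in> A" "y \<in> A" "x + y \<in> A"
    using assms(2) unfolding sum_free_def by blast
  have "x \<noteq> y" "x \<noteq> 0" "y \<noteq> 0" using xy assms(1) by auto
  then have card3: "card {x, y, x + y} = 3" by auto
  have "card (A - {x, y, x + y}) + 3 = card A"
    using card3 xy card_mono[OF finite_bit_vec, of "{x, y, x + y}" A] by (simp add: card_Diff_subset)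
  moreover have "has_k_disj_zs (Suc k) (mset_set A)"
    if "has_k_disj_zs k (mset_set (A - {x, y, x + y}))" for k
    using that xy \<open>x \<noteq> y\<close> \<open>x \<noteq> 0\<close> \<open>y \<noteq> 0\<close>
    by (intro has_k_disj_zs_mset_set_Suc) (auto simp: add_ac)
  ultimately show ?thesis by blast
qed

lemma inj_on_coset_sum:
  fixes p :: "'i \<Rightarrow> bit ^ 'n"
  assumes closed: "\<forall>s\<in>W. \<forall>s'\<in>W. s + s' \<in> W"
    and reps: "\<forall>i\<in>I. \<forall>j\<in>I. i \<noteq> j \<longrightarrow> p i + p j \<notin> W"
  shows "inj_on (\<lambda>(i, s). p i + s) (I \<times> W)"
proof (rule inj_onI, clarsimp)
  fix i s j s' assume h: "i \<in> I" "s \<in> W" "j \<in> I" "s' \<in> W" "p i + s = p j + s'"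
  then have "p i = p j + s' + s" by (simp add: bit_vec_add_eq_iff)
  then have "p i + p j = s + s'" by (simp add: add_ac)
  then have "p i + p j \<in> W" using closed h(2,4) by simp
  then have "i = j" using reps h(1,3) by blast
  then show "i = j \<and> s = s'" using h(5) by simp
qed

lemma obtain_pair_with_sum_outside:
  fixes W :: "(bit ^ 'n) set"
  assumes "2 * card W < 2 ^ CARD('n)"
  obtains x y where "x \<notin> W" "y \<notin> W" "x + y \<notin> W"
proof -
  have "card W < card (UNIV :: (bit ^ 'n) set)" using assms by simp
  then obtain x where x: "x \<notin> W" using ex_not_in_if_card_less[OF finite_bit_vec] by blast
  have "card (W \<union> (+) x ` W) < card (UNIV :: (bit ^ 'n) set)"
    using card_Un_le[of W "(+) x ` W"] assms by (simp add: card_translate_bit_vec)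
  then obtain y where y: "y \<notin> W \<union> (+) x ` W" using ex_not_in_if_card_less[OF finite_bit_vec] by blast
  have "x + y \<notin> W"
  proof
    assume "x + y \<in> W"
    then have "x + (x + y) \<in> (+) x ` W" by blast
    then show False using y by simp
  qed
  then show thesis using that x y by blast
qed

section \<open>The upper bound for \<open>C\<^sub>2\<^sup>4\<close>\<close>

definition vec4 :: "bit \<Rightarrow> bit \<Rightarrow> bit \<Rightarrow> bit \<Rightarrow> C2_4" where
  "vec4 a b c d = (\<chi> i. if i = 1 then a else if i = 2 then b else if i = 3 then c else d)"

lemma vec4_eq_iff [simp]:
  "vec4 a b c d = vec4 a' b' c' d' \<longleftrightarrow> a = a' \<and> b = b' \<and> c = c' \<and> d = d'"
  by (auto simp: vec4_def vec_eq_iff forall_4)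

lemma vec4_add [simp]: "vec4 a b c d + vec4 a' b' c' d' = vec4 (a + a') (b + b') (c + c') (d + d')"
  by (auto simp: vec4_def vec_eq_iff forall_4)

lemma zero_C2_4_eq_vec4: "0 = vec4 0 0 0 0"
  by (auto simp: vec4_def vec_eq_iff forall_4)

lemma vec4_nth_1 [simp]: "vec4 a b c d $ 1 = a"
  by (simp add: vec4_def)

text \<open>With \<open>x, y, x + y\<close> in three distinct cosets of the subgroup \<open>W = {0, u, v, u + v}\<close>,
  the triples \<open>{x + s\<^sub>0, y + s\<^sub>1, x + y + s\<^sub>2}\<close>, for the four rows \<open>(s\<^sub>0, s\<^sub>1, s\<^sub>2)\<close> of a
  Latin square on \<open>W\<close> with \<open>s\<^sub>0 + s\<^sub>1 + s\<^sub>2 = 0\<close>, are disjoint and zero-sum. For \<open>n = 4\<close>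
  they cover the complement of \<open>W\<close>.\<close>

lemma zero_sum_triples_off_subgroup:
  fixes u v :: "bit ^ 'n"
  assumes "u \<noteq> v" "u \<noteq> 0" "v \<noteq> 0" "4 \<le> CARD('n)"
  obtains xss where "length xss = 4" "distinct (concat xss)"
    "set (concat xss) \<inter> {0, u, v, u + v} = {}" "\<forall>xs\<in>set xss. xs \<noteq> [] \<and> sum_list xs = 0"
proof -
  define W where "W = {0, u, v, u + v}"
  have closed: "\<forall>s\<in>W. \<forall>s'\<in>W. s + s' \<in> W" unfolding W_def by (simp add: add_ac)
  have "2 * card W \<le> 8" using card_length[of "[0, u, v, u + v]"] unfolding W_def by simp
  also have "\<dots> < 2 ^ 4" by simp
  also have "\<dots> \<le> 2 ^ CARD('n)" using assms(4) by (rule power_increasing) simp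
  finally have "2 * card W < 2 ^ CARD('n)" .
  then obtain x y where xy: "x \<notin> W" "y \<notin> W" "x + y \<notin> W"
    by (rule obtain_pair_with_sum_outside)
  define p where "p i = [x, y, x + y] ! i" for i :: nat
  define f where "f = (\<lambda>(i, s). p i + s)"
  have inj: "inj_on f ({0, 1, 2} \<times> W)" unfolding f_def
    by (rule inj_on_coset_sum[OF closed]) (use xy in \<open>simp add: p_def add_ac\<close>)
  have f_out: "f (i, s) \<notin> W" if "i \<in> {0, 1, 2}" "s \<in> W" for i s
    using closed[rule_format, of "p i + s" s] that xy unfolding f_def p_def
    by (auto simp: add.assoc)
  let ?rows = "[[0, 0, 0], [u, v, u + v], [v, u + v, u], [u + v, u, v]]"
  let ?xss = "map (\<lambda>row. map f (zip [0::nat, 1, 2] row)) ?rows"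
  let ?ps = "concat (map (zip [0::nat, 1, 2]) ?rows)"
  have concat_xss: "concat ?xss = map f ?ps" by (simp only: map_concat map_map comp_def)
  have ps: "distinct ?ps" "set ?ps \<subseteq> {0, 1, 2} \<times> W"
    using assms(1-3) unfolding W_def by auto
  show thesis
  proof (rule that[of ?xss])
    show "distinct (concat ?xss)"
      unfolding concat_xss distinct_map using ps inj_on_subset[OF inj] by blast
    show "set (concat ?xss) \<inter> {0, u, v, u + v} = {}"
      unfolding concat_xss W_def[symmetric] using ps(2) f_out by fastforce
    show "\<forall>xs\<in>set ?xss. xs \<noteq> [] \<and> sum_list xs = 0"
      by (simp add: f_def p_def add_ac)
  qed simp
qed

lemma has_2_disj_zs_C2_4:
  fixes A :: "C2_4 set"
  assumes "0 \<notin> A" "8 \<le> card A"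
  shows "has_k_disj_zs 2 (mset_set A)"
proof (cases "sum_free A")
  case True
  then have "2 * card A = 2 ^ CARD(4)" using card_sum_free_le[OF True] assms(2) by simp
  then have "a + b + c \<in> A" if "a \<in> A" "b \<in> A" "c \<in> A" for a b c
    by (rule sum_free_max_add3_closed[OF True _ that])
  moreover have "6 < card A" using assms(2) by simp
  ultimately show ?thesis by (rule has_2_disj_zs_if_add3_closed)
next
  case False
  then obtain B where B: "B \<subseteq> A" "card B + 3 = card A"
    "\<forall>k. has_k_disj_zs k (mset_set B) \<longrightarrow> has_k_disj_zs (Suc k) (mset_set A)"
    using not_sum_free_remove_triple[OF assms(1)] by blast
  have "CARD(4) < card B" using B(2) assms(2) by simp
  then have "has_k_disj_zs (Suc 1) (mset_set A)" using B(3) has_1_disj_zs_if_card_gt by blast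
  then show ?thesis by (simp only: Suc_1)
qed

lemma has_3_disj_zs_C2_4:
  fixes A :: "C2_4 set"
  assumes "0 \<notin> A" "11 \<le> card A"
  shows "has_k_disj_zs 3 (mset_set A)"
proof -
  have "\<not> sum_free A" using card_sum_free_le[of A] assms(2) by auto
  then obtain B where B: "B \<subseteq> A" "card B + 3 = card A"
    "\<forall>k. has_k_disj_zs k (mset_set B) \<longrightarrow> has_k_disj_zs (Suc k) (mset_set A)"
    using not_sum_free_remove_triple[OF assms(1)] by blast
  have "0 \<notin> B" "8 \<le> card B" using B(1,2) assms by auto
  then have "has_k_disj_zs (Suc 2) (mset_set A)" using B(3) has_2_disj_zs_C2_4 by blast
  then show ?thesis by (simp add: numeral_3_eq_3 numeral_2_eq_2)
qed

lemma has_4_disj_zs_C2_4: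
  fixes A :: "C2_4 set"
  assumes "0 \<notin> A" "13 \<le> card A"
  shows "has_k_disj_zs 4 (mset_set A)"
proof -
  have "card (UNIV - A) = 16 - card A" using card_Diff_subset[of A UNIV] by simp
  then have "card (UNIV - A - {0}) \<le> 2" using assms by (simp add: card_Diff_singleton)
  moreover have "card (UNIV - {0 :: C2_4}) = 15" by (simp add: card_Diff_singleton)
  ultimately have "\<exists>C. UNIV - A - {0} \<subseteq> C \<and> C \<subseteq> UNIV - {0} \<and> card C = 2"
    by (intro exists_subset_between) auto
  then obtain C where C: "UNIV - A - {0} \<subseteq> C" "C \<subseteq> UNIV - {0}" "card C = 2" by iprover
  obtain u v where uv: "C = {u, v}" "u \<noteq> v" using C(3) unfolding card_2_iff by blast
  have "u \<noteq> 0" "v \<noteq> 0" using C(2) uv(1) by auto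
  then obtain xss where xss: "length xss = 4" "distinct (concat xss)"
    "set (concat xss) \<inter> {0, u, v, u + v} = {}" "\<forall>xs\<in>set xss. xs \<noteq> [] \<and> sum_list xs = 0"
    by (rule zero_sum_triples_off_subgroup[OF uv(2)]) simp_all
  have "set (concat xss) \<subseteq> A" using xss(3) C(1) uv(1) by blast
  then show ?thesis using has_k_disj_zs_of_lists[OF _ xss(2) _ xss(4)] xss(1) by simp
qed

lemma has_5_disj_zs_C2_4:
  fixes A :: "C2_4 set"
  assumes "0 \<notin> A" "15 \<le> card A"
  shows "has_k_disj_zs 5 (mset_set A)"
proof -
  define u where "u = vec4 1 0 0 0"
  define v where "v = vec4 0 1 0 0"
  have uv: "u \<noteq> v" "u \<noteq> 0" "v \<noteq> 0" by (simp_all add: u_def v_def zero_C2_4_eq_vec4)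
  then obtain xss where xss: "length xss = 4" "distinct (concat xss)"
    "set (concat xss) \<inter> {0, u, v, u + v} = {}" "\<forall>xs\<in>set xss. xs \<noteq> [] \<and> sum_list xs = 0"
    by (rule zero_sum_triples_off_subgroup) simp
  have "A \<subseteq> UNIV - {0}" "card (UNIV - {0 :: C2_4}) = 15"
    using assms(1) by (auto simp: card_Diff_singleton)
  then have A: "A = UNIV - {0}" using assms(2) by (intro card_seteq) simp_all
  have "has_k_disj_zs (length (xss @ [[u, v, u + v]])) (mset_set A)"
  proof (rule has_k_disj_zs_of_lists)
    show "distinct (concat (xss @ [[u, v, u + v]]))" using xss(2,3) uv by auto
    show "set (concat (xss @ [[u, v, u + v]])) \<subseteq> A" using xss(3) uv unfolding A by auto
    show "\<forall>xs\<in>set (xss @ [[u, v, u + v]]). xs \<noteq> [] \<and> sum_list xs = 0"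
      using xss(4) by (simp add: add_ac)
  qed simp
  then show ?thesis using xss(1) by simp
qed

definition D_C2_4 :: "nat \<Rightarrow> nat" where
  "D_C2_4 k = (if k = 0 then 0 else if k = 1 then 5 else if k = 2 then 8 else 2 * k + 5)"

lemma has_k_disj_zs_nonzero_set_if_D_C2_4_le:
  fixes A :: "C2_4 set"
  assumes "0 \<notin> A" "D_C2_4 k \<le> card A"
  shows "has_k_disj_zs k (mset_set A)"
proof -
  have "card A \<le> 15"
    using card_mono[of "UNIV - {0}" A] assms(1)
    by (auto simp: card_Diff_singleton)
  then have "k \<le> 5" using assms(2) by (simp add: D_C2_4_def split: if_splits)
  then consider "k = 0" | "k = 1" | "k = 2" | "k = 3" | "k = 4" | "k = 5"
    by (fastforce simp: le_Suc_eq numeral_eq_Suc)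
  then show ?thesis
    using assms has_1_disj_zs_if_card_gt[of A] has_2_disj_zs_C2_4[of A] has_3_disj_zs_C2_4[of A]
      has_4_disj_zs_C2_4[of A] has_5_disj_zs_C2_4[of A]
    by cases (simp_all add: D_C2_4_def)
qed

lemma short_zero_sum_or_nonzero_set:
  fixes S :: "(bit ^ 'n) multiset"
  obtains T where "T \<subseteq># S" "T \<noteq> {#}" "zero_sum T" "size T \<le> 2"
    | A where "S = mset_set A" "0 \<notin> A"
proof -
  consider "0 \<in># S" | x where "2 \<le> count S x" | "0 \<notin># S" "\<forall>x. count S x \<le> 1"
    by (metis not_less_eq_eq Suc_1)
  then show thesis
  proof cases
    case 1
    then show thesis by (intro that(1)[of "{#0#}"]) (simp_all add: zero_sum_def)
  next
    case (2 x)
    then have "{#x, x#} \<subseteq># S" by (simp add: subseteq_mset_def)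
    then show thesis by (intro that(1)[of "{#x, x#}"]) (simp_all add: zero_sum_def)
  next
    case 3
    have "S = mset_set (set_mset S)"
    proof (rule multiset_eqI)
      fix x show "count S x = count (mset_set (set_mset S)) x"
        using 3(2)[rule_format, of x] count_eq_zero_iff[of S x] by (auto simp: count_mset_set' le_Suc_eq)
    qed
    then show thesis by (rule that(2)) (use 3(1) in simp)
  qed
qed

lemma has_k_disj_zs_if_D_C2_4_le:
  fixes S :: "C2_4 multiset"
  shows "D_C2_4 k \<le> size S \<Longrightarrow> has_k_disj_zs k S"
proof (induction k arbitrary: S)
  case (Suc m)
  show ?case
  proof (cases S rule: short_zero_sum_or_nonzero_set)
    case (1 T)
    have "D_C2_4 m + 2 \<le> D_C2_4 (Suc m)" by (simp add: D_C2_4_def)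
    then have "D_C2_4 m \<le> size (S - T)" using Suc.prems 1 by (simp add: size_Diff_submset)
    then show ?thesis using Suc.IH 1 by (intro has_k_disj_zs_Suc[of T]) auto
  next
    case (2 A)
    have "D_C2_4 (Suc m) \<le> card A" using Suc.prems unfolding 2(1) by simp
    then show ?thesis unfolding 2(1) by (rule has_k_disj_zs_nonzero_set_if_D_C2_4_le[OF 2(2)])
  qed
qed simp

section \<open>The lower bound for \<open>C\<^sub>2\<^sup>4\<close>\<close>

definition weight :: "C2_4 multiset \<Rightarrow> nat" where
  "weight T = size T + size (filter_mset (\<lambda>x. x $ 1 = 0) T)"

lemma weight_add [simp]: "weight (A + B) = weight A + weight B"
  by (simp add: weight_def)

lemma weight_eq_0_iff [simp]: "weight T = 0 \<longleftrightarrow> T = {#}"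
  by (auto simp: weight_def)

lemma weight_sum_list: "weight (sum_list Ts) = sum_list (map weight Ts)"
  by (induction Ts) simp_all

lemma weight_first_coord_1: "\<forall>x\<in>#T. x $ 1 = 1 \<Longrightarrow> weight T = size T"
  by (simp add: weight_def)

lemma weight_first_coord_0: "\<forall>x\<in>#T. x $ 1 = 0 \<Longrightarrow> weight T = 2 * size T"
  by (simp add: weight_def filter_mset_all)

lemma of_nat_bit_eq_0_iff: "(of_nat n :: bit) = 0 \<longleftrightarrow> even n"
  by (induction n) auto

lemma even_size_zero_sum_first_coord_1:
  fixes T :: "C2_4 multiset"
  assumes "sum_mset T = 0"
  shows "even (size (filter_mset (\<lambda>x. x $ 1 = 1) T))"
proof -
  have "sum_mset T $ 1 = of_nat (size (filter_mset (\<lambda>x. x $ 1 = 1) T))"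
  proof (induction T)
    case (add x T)
    then show ?case by (cases "x $ 1") simp_all
  qed simp
  then show ?thesis using assms of_nat_bit_eq_0_iff by simp
qed

text \<open>The weight-\<open>1\<close> part of a zero-sum \<open>T\<close> has even size; it is not a pair \<open>{a, b}\<close>
  alone since \<open>a \<noteq> b\<close>, and no nonzero element is zero-sum alone.\<close>

lemma weight_zero_sum_ge_4:
  fixes B :: "C2_4 set" and R T :: "C2_4 multiset"
  assumes B: "\<forall>x\<in>B. x $ 1 = 1" and R: "\<forall>x\<in>#R. x $ 1 = 0 \<and> x \<noteq> 0"
    and T: "T \<subseteq># mset_set B + R" "T \<noteq> {#}" "sum_mset T = 0"
  shows "4 \<le> weight T"
proof -
  define T\<^sub>1 where "T\<^sub>1 = filter_mset (\<lambda>x. x $ 1 = 1) T"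
  define T\<^sub>0 where "T\<^sub>0 = filter_mset (\<lambda>x. x $ 1 = 0) T"
  have T_split: "T = T\<^sub>1 + T\<^sub>0"
    unfolding T\<^sub>1_def T\<^sub>0_def using multiset_partition[of T "\<lambda>x. x $ 1 = 1"] by simp
  then have "size T = size T\<^sub>1 + size T\<^sub>0" by (metis size_union)
  then have weight_T: "weight T = size T\<^sub>1 + 2 * size T\<^sub>0" by (simp add: weight_def flip: T\<^sub>0_def)
  have "T\<^sub>1 \<subseteq># filter_mset (\<lambda>x. x $ 1 = 1) (mset_set B + R)"
    unfolding T\<^sub>1_def by (rule multiset_filter_mono[OF T(1)])
  also have "\<dots> = mset_set B" using B R by (simp add: filter_mset_all del: filter_mset_mset_set)
  finally have T\<^sub>1_B: "T\<^sub>1 \<subseteq># mset_set B" .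
  have "T\<^sub>0 \<subseteq># filter_mset (\<lambda>x. x $ 1 = 0) (mset_set B + R)"
    unfolding T\<^sub>0_def by (rule multiset_filter_mono[OF T(1)])
  also have "\<dots> = R" using B R by (simp add: filter_mset_all del: filter_mset_mset_set)
  finally have T\<^sub>0_R: "T\<^sub>0 \<subseteq># R" .
  have "even (size T\<^sub>1)" unfolding T\<^sub>1_def by (rule even_size_zero_sum_first_coord_1[OF T(3)])
  then have "4 \<le> size T\<^sub>1 \<or> size T\<^sub>1 = 2 \<or> size T\<^sub>1 = 0" by presburger
  then consider "4 \<le> size T\<^sub>1" | "size T\<^sub>1 = 2" | "T\<^sub>1 = {#}" by auto
  then show ?thesis
  proof cases
    case 2
    then obtain a T' where "T\<^sub>1 = add_mset a T'" "size T' = 1"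
      using size_eq_Suc_imp_eq_union[of T\<^sub>1 1] by auto
    then obtain b where ab: "T\<^sub>1 = {#a, b#}" by (metis size_1_singleton_mset)
    have "count T\<^sub>1 a \<le> 1"
      using mset_subset_eq_count[OF T\<^sub>1_B, of a] by (simp add: count_mset_set' split: if_splits)
    then have "a \<noteq> b" using ab by auto
    then have "T\<^sub>0 \<noteq> {#}" using T(3) T_split ab by auto
    then show ?thesis using weight_T 2 by (simp add: Suc_le_eq nonempty_has_size)
  next
    case 3
    have "size T\<^sub>0 \<noteq> 1"
    proof
      assume "size T\<^sub>0 = 1"
      then obtain h where "T\<^sub>0 = {#h#}" using size_1_singleton_mset by blast
      then show False using T(3) T_split 3 T\<^sub>0_R R by (auto dest: mset_subset_eqD)
    qed
    moreover have "T\<^sub>0 \<noteq> {#}" using T(2) T_split 3 by simp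
    ultimately show ?thesis using weight_T 3 by (simp add: nonempty_has_size)
  qed (use weight_T in simp)
qed

lemma not_has_k_disj_zs_if_weight_le:
  fixes B :: "C2_4 set" and R :: "C2_4 multiset"
  assumes B: "\<forall>x\<in>B. x $ 1 = 1" and R: "\<forall>x\<in>#R. x $ 1 = 0 \<and> x \<noteq> 0"
    and "weight (mset_set B + R) \<le> 4 * k" "sum_mset (mset_set B + R) \<noteq> 0"
  shows "\<not> has_k_disj_zs k (mset_set B + R)"
proof
  let ?S = "mset_set B + R"
  assume "has_k_disj_zs k ?S"
  then obtain Ts where Ts: "length Ts = k" "\<forall>T\<in>set Ts. T \<noteq> {#} \<and> zero_sum T"
    "sum_list Ts \<subseteq># ?S" unfolding has_k_disj_zs_def by blast
  have "4 \<le> weight T" if "T \<in> set Ts" for T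
  proof (rule weight_zero_sum_ge_4[OF B R])
    show "T \<subseteq># ?S" using mset_subset_eq_sum_list[OF that] Ts(3) by (rule subset_mset.order_trans)
  qed (use that Ts(2) in \<open>auto simp: zero_sum_def\<close>)
  then have "4 * k \<le> weight (sum_list Ts)"
    unfolding weight_sum_list using sum_list_mono[of Ts "\<lambda>_. 4" weight] Ts(1)
    by (simp add: sum_list_triv mult.commute)
  moreover obtain C where C: "?S = sum_list Ts + C" using Ts(3) mset_subset_eq_exists_conv by blast
  moreover have "weight (sum_list Ts) + weight C \<le> 4 * k" using assms(3) unfolding C by simp
  ultimately have "weight C = 0" by linarith
  then have "?S = sum_list Ts" using C by simp
  moreover have "sum_mset (sum_list Ts) = 0"
    using Ts(2) by (induction Ts) (auto simp: zero_sum_def)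
  ultimately show False using assms(4) by simp
qed

lemma sum_mset_replicate_mset_bit_vec:
  "sum_mset (replicate_mset n (x :: bit ^ 'n)) = (if even n then 0 else x)"
  by (induction n) simp_all

lemma not_has_1_disj_zs_C2_4:
  obtains S :: "C2_4 multiset" where "size S = 4" "\<not> has_k_disj_zs 1 S"
proof -
  let ?B = "{vec4 1 0 0 0, vec4 1 1 0 0, vec4 1 0 1 0, vec4 1 0 0 1}"
  have "\<forall>x\<in>?B. x $ 1 = 1" "card ?B = 4" "\<Sum>?B \<noteq> 0" by (simp_all add: zero_C2_4_eq_vec4)
  then show thesis using that[of "mset_set ?B"] not_has_k_disj_zs_if_weight_le[of ?B "{#}" 1]
    by (simp add: weight_first_coord_1 sum_unfold_sum_mset)
qed

definition affine_hyperplane_C2_4 :: "C2_4 set" where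
  "affine_hyperplane_C2_4 = {vec4 1 0 0 0, vec4 1 0 0 1, vec4 1 0 1 0, vec4 1 0 1 1,
      vec4 1 1 0 0, vec4 1 1 0 1, vec4 1 1 1 0, vec4 1 1 1 1}"

lemma affine_hyperplane_C2_4:
  "\<forall>x\<in>affine_hyperplane_C2_4. x $ 1 = 1" "card affine_hyperplane_C2_4 = 8"
  "\<Sum>affine_hyperplane_C2_4 = 0"
  unfolding affine_hyperplane_C2_4_def by (simp_all add: zero_C2_4_eq_vec4)

lemma not_has_2_disj_zs_C2_4:
  obtains S :: "C2_4 multiset" where "size S = 7" "\<not> has_k_disj_zs 2 S"
proof -
  let ?H = affine_hyperplane_C2_4
  let ?B = "?H - {vec4 1 1 1 1}"
  have "vec4 1 1 1 1 \<in> ?H" by (simp add: affine_hyperplane_C2_4_def)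
  then have "\<Sum>?B = vec4 1 1 1 1" using affine_hyperplane_C2_4(3) by (simp add: sum_diff1)
  then have "\<forall>x\<in>?B. x $ 1 = 1" "card ?B = 7" "\<Sum>?B \<noteq> 0"
    using affine_hyperplane_C2_4(1,2) \<open>vec4 1 1 1 1 \<in> ?H\<close> by (simp_all add: zero_C2_4_eq_vec4)
  then show thesis using that[of "mset_set ?B"] not_has_k_disj_zs_if_weight_le[of ?B "{#}" 2]
    by (simp add: weight_first_coord_1 sum_unfold_sum_mset)
qed

text \<open>The affine hyperplane (weight \<open>8\<close>, sum \<open>0\<close>) together with \<open>2k - 5\<close> copies of \<open>e\<^sub>2\<close>
  and one \<open>e\<^sub>3\<close>: weight \<open>4k\<close> and sum \<open>e\<^sub>2 + e\<^sub>3\<close>.\<close>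

lemma not_has_k_disj_zs_C2_4:
  assumes "3 \<le> k"
  obtains S :: "C2_4 multiset" where "size S = 2 * k + 4" "\<not> has_k_disj_zs k S"
proof -
  let ?H = affine_hyperplane_C2_4
  define e\<^sub>2 e\<^sub>3 :: C2_4 where "e\<^sub>2 = vec4 0 1 0 0" and "e\<^sub>3 = vec4 0 0 1 0"
  define R where "R = replicate_mset (2 * k - 5) e\<^sub>2 + {#e\<^sub>3#}"
  have "e\<^sub>2 $ 1 = 0" "e\<^sub>3 $ 1 = 0" "e\<^sub>2 \<noteq> 0" "e\<^sub>3 \<noteq> 0" "e\<^sub>2 + e\<^sub>3 \<noteq> 0"
    by (simp_all add: e\<^sub>2_def e\<^sub>3_def zero_C2_4_eq_vec4)
  then have R: "\<forall>x\<in>#R. x $ 1 = 0 \<and> x \<noteq> 0" "size R = 2 * k - 4" "sum_mset R \<noteq> 0"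
    unfolding R_def using assms
    by (auto simp: sum_mset_replicate_mset_bit_vec add.commute simp del: sum_mset_replicate_mset)
  have "weight (mset_set ?H + R) = 4 * k"
    using affine_hyperplane_C2_4 R assms by (simp add: weight_first_coord_1 weight_first_coord_0)
  moreover have "sum_mset (mset_set ?H + R) \<noteq> 0"
    using affine_hyperplane_C2_4(3) R(3) by (simp add: sum_unfold_sum_mset)
  ultimately show thesis
    using that[of "mset_set ?H + R"] not_has_k_disj_zs_if_weight_le[OF _ R(1), of ?H k]
      affine_hyperplane_C2_4 R(2) assms
    by simp
qed

lemma Dk_C2_4:
  assumes "1 \<le> k"
  shows "Dk TYPE(C2_4) k = D_C2_4 k"
proof -
  consider "k = 1" | "k = 2" | "3 \<le> k" using assms by linarith
  then obtain S :: "C2_4 multiset" where "Suc (size S) = D_C2_4 k" "\<not> has_k_disj_zs k S"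
  proof cases
    case 1
    obtain S :: "C2_4 multiset" where "size S = 4" "\<not> has_k_disj_zs 1 S"
      by (rule not_has_1_disj_zs_C2_4)
    then show thesis using that[of S] 1 by (simp add: D_C2_4_def)
  next
    case 2
    obtain S :: "C2_4 multiset" where "size S = 7" "\<not> has_k_disj_zs 2 S"
      by (rule not_has_2_disj_zs_C2_4)
    then show thesis using that[of S] 2 by (simp add: D_C2_4_def)
  next
    case 3
    then obtain S :: "C2_4 multiset" where "size S = 2 * k + 4" "\<not> has_k_disj_zs k S"
      by (rule not_has_k_disj_zs_C2_4)
    then show thesis using that[of S] 3 by (simp add: D_C2_4_def)
  qed
  then show ?thesis using has_k_disj_zs_if_D_C2_4_le by (intro Dk_eqI) auto
qed

theorem theorem7p9:
  shows "D0 TYPE(C2_4) = 5 \<and> kD TYPE(C2_4) = 3 \<and>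
         Dk TYPE(C2_4) 1 = 5 \<and> Dk TYPE(C2_4) 2 = 8"
proof -
  have large: "Dk TYPE(C2_4) k = 5 + k * group_exp TYPE(C2_4)" if "2 < k" for k
    using Dk_C2_4[of k] that by (simp add: D_C2_4_def group_exp_bit_vec)
  then have D0: "D0 TYPE(C2_4) = 5" by (intro D0_eqI[of 3]) simp
  have "kD TYPE(C2_4) = Suc 2"
    using large Dk_C2_4[of 2] by (intro kD_eqI) (simp_all add: D0 D_C2_4_def group_exp_bit_vec)
  then show ?thesis using D0 Dk_C2_4[of 1] Dk_C2_4[of 2] by (simp add: D_C2_4_def)
qed

end
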